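(* Let $F$ be an ordered $(m,n)$-forest with priority traversal $\tau$. Then $\mathrm{Rec}(F)=\mathrm{Rec}(\tau)$.
   Context: $[m]=\{1,\dots,m\}$. An ordered $(m,n)$-forest is a rooted forest with $n+1$ nodes and $m$ edges whose component trees $T_0,\dots,T_{n-m}$ are totally ordered, with unlabeled roots marked $\circ,\circ_1,\dots,\circ_{n-m}$, and non-root vertices labeled bijectively by $[m]$. Priority search: initially only the children of $\circ$ are unblocked; at each step visit the unblocked unvisited node with the smallest label and unblock its children; when a tree is exhausted, move to the next tree, visit its root and unblock its children. The priority traversal $\tau$ is the word of length $n$ recording the labels of visited nodes in order, with $-$ recorded for each root visited (the initial visit of $\circ$ is not recorded). $\mathrm{Rec}(F)$ is the set of forest records: non-root nodes whose label is the largest among the labels of the non-root nodes on the path from the root of their tree to them. For a word in $[m]\cup\{-\}$, $\mathrm{Rec}$ denotes the set of its records, i.e. the left-to-right maxima of its maximal subwords not containing $-$. *)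

theory Defs
  imports Main
begin

text \<open>Nodes of an ordered (m,n)-forest: the roots are Root 0 (the root written as a plain circle),
 Root 1, ..., Root (n-m); the non-root vertices are Lab 1, ..., Lab m.
 A forest is given by the parent function par, defined on the labels 1..m.\<close>
datatype fnode = Root nat | Lab nat

inductive anc :: "(nat \<Rightarrow> fnode) \<Rightarrow> nat \<Rightarrow> nat \<Rightarrow> bool" for par where
  anc_refl: "anc par i i"
| anc_step: "par i = Lab j \<Longrightarrow> anc par j k \<Longrightarrow> anc par i k"

text \<open>par describes an ordered (m,n)-forest: n+1 nodes, m edges, trees T_0..T_(n-m).\<close>
definition ordered_forest :: "nat \<Rightarrow> nat \<Rightarrow> (nat \<Rightarrow> fnode) \<Rightarrow> bool" where
  "ordered_forest m n par \<longleftrightarrow> m \<le> n \<and>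
     (\<forall>i\<in>{1..m}. (\<forall>j. par i = Lab j \<longrightarrow> j \<in> {1..m}) \<and> (\<forall>k. par i = Root k \<longrightarrow> k \<le> n - m)) \<and>
     (\<forall>i\<in>{1..m}. \<exists>j k. anc par i j \<and> par j = Root k)"

definition children :: "(nat \<Rightarrow> fnode) \<Rightarrow> nat \<Rightarrow> fnode \<Rightarrow> nat set" where
  "children par m v = {i \<in> {1..m}. par i = v}"

text \<open>Priority search with a fuel argument. State: index k of the current tree, set U of
 unblocked unvisited labels. Some x records the visit of label x, None records a root visit (the "-").\<close>
fun psearch :: "(nat \<Rightarrow> fnode) \<Rightarrow> nat \<Rightarrow> nat \<Rightarrow> nat \<Rightarrow> nat \<Rightarrow> nat set \<Rightarrow> nat option list" where
  "psearch par m r 0 k U = []"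
| "psearch par m r (Suc f) k U =
     (if U \<noteq> {} then
        Some (Min U) # psearch par m r f k ((U - {Min U}) \<union> children par m (Lab (Min U)))
      else if k < r then
        None # psearch par m r f (Suc k) (children par m (Root (Suc k)))
      else [])"

text \<open>The priority traversal (a word of length n; the initial visit of Root 0 is not recorded).\<close>
definition priority_traversal :: "nat \<Rightarrow> nat \<Rightarrow> (nat \<Rightarrow> fnode) \<Rightarrow> nat option list" where
  "priority_traversal m n par = psearch par m (n - m) n 0 (children par m (Root 0))"

definition forest_rec :: "nat \<Rightarrow> (nat \<Rightarrow> fnode) \<Rightarrow> nat set" where
  "forest_rec m par = {i \<in> {1..m}. \<forall>j. anc par i j \<longrightarrow> j \<le> i}"

text \<open>Records of a word over [m] \<union> {-}: left-to-right maxima of the maximal subwords without -.\<close>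
definition word_rec :: "nat option list \<Rightarrow> nat set" where
  "word_rec w = {x. \<exists>p < length w. w ! p = Some x \<and>
       (\<forall>q < p. (\<forall>r. q \<le> r \<and> r < p \<longrightarrow> w ! r \<noteq> None) \<longrightarrow> (\<forall>y. w ! q = Some y \<longrightarrow> y < x))}"

end

theory Submission
  imports Defs
begin

text \<open>
  Track the records through the search. A search state is the index k of the current tree and
  the set U of unblocked unvisited labels; the labels still to be visited are the descendants
  of U and the labels of the later trees, and no proper ancestor of an element of U is among
  them. Call an unvisited label a pending record if it is the largest unvisited label on its
  path. Visiting u = Min U outputs u, which is always a pending record. Below the new frontier,
  the old pending records are exactly the new pending records exceeding u: such an x lies
  either below u, or below some c \<in> U, and then u \<le> c \<le> x. Consequently the records
  produced by the rest of the search, when the labels S have already been output in the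
  current segment, are exactly the pending records that lie in a later tree or exceed all of S.
  Initially every label is unvisited and the pending records are the forest records.
\<close>

fun segment_records :: "nat set \<Rightarrow> nat option list \<Rightarrow> nat set" where
  "segment_records S [] = {}"
| "segment_records S (None # w) = segment_records {} w"
| "segment_records S (Some x # w) =
     (if \<forall>y\<in>S. y < x then {x} else {}) \<union> segment_records (insert x S) w"

lemma segment_records_conv_nth:
  "segment_records S w = {x. \<exists>p < length w. w ! p = Some x \<and>
     (None \<notin> set (take p w) \<longrightarrow> (\<forall>y\<in>S. y < x)) \<and>
     (\<forall>q < p. None \<notin> set (drop q (take p w)) \<longrightarrow> (\<forall>y. w ! q = Some y \<longrightarrow> y < x))}"
  by (induction S w rule: segment_records.induct) (auto simp: Ex_less_Suc2 All_less_Suc2)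

lemma None_notin_slice_iff:
  assumes "p \<le> length w"
  shows "None \<notin> set (drop q (take p w)) \<longleftrightarrow> (\<forall>r. q \<le> r \<and> r < p \<longrightarrow> w ! r \<noteq> None)"
  using assms by (auto simp: in_set_conv_nth) (metis le_add_diff_inverse diff_less_mono)

lemma word_rec_eq_segment_records: "word_rec w = segment_records {} w"
  unfolding word_rec_def segment_records_conv_nth by (auto simp: None_notin_slice_iff)

lemma anc_trans: "anc par x y \<Longrightarrow> anc par y z \<Longrightarrow> anc par x z"
  by (induction rule: anc.induct) (auto intro: anc.intros)

lemma anc_parent: "par x = Lab y \<Longrightarrow> anc par x y"
  by (blast intro: anc.intros)

lemma anc_parentD: "anc par x y \<Longrightarrow> x \<noteq> y \<Longrightarrow> \<exists>z. par x = Lab z \<and> anc par z y"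
  by (cases rule: anc.cases) auto

lemma anc_childD: "anc par x y \<Longrightarrow> x \<noteq> y \<Longrightarrow> \<exists>c. par c = Lab y \<and> anc par x c"
proof (induction rule: anc.induct)
  case (anc_step i j k)
  then show ?case
    by (cases "j = k") (auto intro: anc.intros)
qed simp

lemma anc_Root_eq: "anc par x y \<Longrightarrow> par x = Root k \<Longrightarrow> y = x"
  by (cases rule: anc.cases) auto

lemma anc_self_loop_eq: "anc par x y \<Longrightarrow> par x = Lab x \<Longrightarrow> y = x"
  by (induction rule: anc.induct) auto

lemma anc_linear: "anc par x a \<Longrightarrow> anc par x b \<Longrightarrow> anc par a b \<or> anc par b a"
proof (induction arbitrary: b rule: anc.induct)
  case (anc_refl i)
  then show ?case by blast
next
  case (anc_step i j k)
  show ?case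
  proof (cases "b = i")
    case True
    then show ?thesis using anc_step.hyps by (auto intro: anc.intros)
  next
    case False
    then show ?thesis using anc_step anc_parentD by fastforce
  qed
qed

definition in_tree :: "(nat \<Rightarrow> fnode) \<Rightarrow> nat \<Rightarrow> nat \<Rightarrow> bool" where
  "in_tree par x k \<longleftrightarrow> (\<exists>j. anc par x j \<and> par j = Root k)"

lemma in_tree_unique: "in_tree par x k \<Longrightarrow> in_tree par x k' \<Longrightarrow> k = k'"
  unfolding in_tree_def by (metis anc_linear anc_Root_eq fnode.inject(1))

lemma in_tree_anc_iff: "anc par x y \<Longrightarrow> in_tree par y k \<longleftrightarrow> in_tree par x k"
  unfolding in_tree_def by (metis anc_linear anc_Root_eq anc_trans)

definition descendants :: "(nat \<Rightarrow> fnode) \<Rightarrow> nat \<Rightarrow> nat set \<Rightarrow> nat set" where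
  "descendants par m U = {x \<in> {1..m}. \<exists>u\<in>U. anc par x u}"

definition unvisited :: "(nat \<Rightarrow> fnode) \<Rightarrow> nat \<Rightarrow> nat \<Rightarrow> nat set \<Rightarrow> nat set" where
  "unvisited par m k U = descendants par m U \<union> {x \<in> {1..m}. \<exists>k'>k. in_tree par x k'}"

definition frontier :: "(nat \<Rightarrow> fnode) \<Rightarrow> nat \<Rightarrow> nat \<Rightarrow> nat set \<Rightarrow> bool" where
  "frontier par m k U \<longleftrightarrow> U \<subseteq> {1..m} \<and> (\<forall>u\<in>U. in_tree par u k) \<and>
     (\<forall>u\<in>U. \<forall>j\<in>descendants par m U. anc par u j \<longrightarrow> j = u)"

definition pending_records :: "(nat \<Rightarrow> fnode) \<Rightarrow> nat \<Rightarrow> nat \<Rightarrow> nat set \<Rightarrow> nat set" where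
  "pending_records par m k U =
     {x \<in> unvisited par m k U. \<forall>j\<in>unvisited par m k U. anc par x j \<longrightarrow> j \<le> x}"

lemma unvisited_subset: "unvisited par m k U \<subseteq> {1..m}"
  unfolding unvisited_def descendants_def by blast

lemma finite_unvisited: "finite (unvisited par m k U)"
  using finite_subset[OF unvisited_subset] by blast

lemma frontier_finite: "frontier par m k U \<Longrightarrow> finite U"
  unfolding frontier_def using finite_subset by blast

lemma frontier_subset_descendants: "frontier par m k U \<Longrightarrow> U \<subseteq> descendants par m U"
  unfolding frontier_def descendants_def by (blast intro: anc.intros)

lemma frontier_children_Root: "frontier par m k (children par m (Root k))"
  unfolding frontier_def children_def in_tree_def using anc_Root_eq by (blast intro: anc.intros)

context
  fixes m n :: nat and par :: "nat \<Rightarrow> fnode"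
  assumes forest: "ordered_forest m n par"
begin

lemma anc_closed: "anc par x y \<Longrightarrow> x \<in> {1..m} \<Longrightarrow> y \<in> {1..m}"
proof (induction rule: anc.induct)
  case (anc_step i j k)
  then show ?case using forest unfolding ordered_forest_def by blast
qed

lemma in_tree_exists: "x \<in> {1..m} \<Longrightarrow> \<exists>k \<le> n - m. in_tree par x k"
  using forest anc_closed unfolding ordered_forest_def in_tree_def by blast

lemma parent_neq_self: "x \<in> {1..m} \<Longrightarrow> par x \<noteq> Lab x"
  using forest anc_self_loop_eq unfolding ordered_forest_def by fastforce

lemma descendants_step:
  assumes U: "frontier par m k U" "u \<in> U"
  shows "descendants par m (U - {u} \<union> children par m (Lab u)) = descendants par m U - {u}"
proof (intro equalityI subsetI)
  fix x
  assume "x \<in> descendants par m (U - {u} \<union> children par m (Lab u))"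
  then obtain a where x: "x \<in> {1..m}" "anc par x a" and a: "a \<in> U - {u} \<union> children par m (Lab u)"
    unfolding descendants_def by blast
  have "a \<in> descendants par m U \<and> a \<noteq> u"
  proof (cases "a \<in> U - {u}")
    case True
    then show ?thesis using U unfolding frontier_def descendants_def by (blast intro: anc.intros)
  next
    case False
    then have "par a = Lab u" "a \<in> {1..m}" using a unfolding children_def by auto
    then show ?thesis using U parent_neq_self unfolding descendants_def by (blast intro: anc.intros)
  qed
  moreover have "x \<noteq> u"
    using U calculation x(2) unfolding frontier_def by metis
  ultimately show "x \<in> descendants par m U - {u}"
    using x anc_trans unfolding descendants_def by blast
next
  fix x
  assume x: "x \<in> descendants par m U - {u}"
  then obtain a where "a \<in> U" "anc par x a" "x \<in> {1..m}"
    unfolding descendants_def by blast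
  then show "x \<in> descendants par m (U - {u} \<union> children par m (Lab u))"
    using x anc_childD[of par x u] anc_closed unfolding descendants_def children_def
    by (cases "a = u") auto
qed

lemma frontier_step:
  assumes U: "frontier par m k U" "u \<in> U"
  shows "frontier par m k (U - {u} \<union> children par m (Lab u))"
  unfolding frontier_def descendants_step[OF U]
proof (intro conjI ballI impI)
  show "U - {u} \<union> children par m (Lab u) \<subseteq> {1..m}"
    using U unfolding frontier_def children_def by auto
next
  fix v
  assume "v \<in> U - {u} \<union> children par m (Lab u)"
  then consider "v \<in> U - {u}" | "par v = Lab u"
    unfolding children_def by auto
  note v = this
  then show "in_tree par v k"
  proof cases
    case 1
    then show ?thesis using U unfolding frontier_def by blast
  next
    case 2
    then have "anc par v u" by (rule anc_parent)
    then show ?thesis using U in_tree_anc_iff[THEN iffD1] unfolding frontier_def by blast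
  qed
  fix j
  assume j: "j \<in> descendants par m U - {u}" "anc par v j"
  from v show "j = v"
  proof cases
    case 1
    then show ?thesis using U j unfolding frontier_def by blast
  next
    case 2
    then show ?thesis using U j anc_parentD unfolding frontier_def by fastforce
  qed
qed

lemma unvisited_step:
  assumes U: "frontier par m k U" "u \<in> U"
  shows "unvisited par m k (U - {u} \<union> children par m (Lab u)) = unvisited par m k U - {u}"
proof -
  have "in_tree par u k" using U unfolding frontier_def by blast
  then have "u \<notin> {x \<in> {1..m}. \<exists>k'>k. in_tree par x k'}"
    by (auto dest: in_tree_unique)
  then show ?thesis
    unfolding unvisited_def descendants_step[OF U] by blast
qed

lemma descendants_children_Root:
  "descendants par m (children par m (Root k)) = {x \<in> {1..m}. in_tree par x k}"
  unfolding descendants_def children_def in_tree_def using anc_closed by blast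

lemma unvisited_next_tree:
  "unvisited par m (Suc k) (children par m (Root (Suc k))) = unvisited par m k {}"
proof -
  have later_trees: "(\<exists>k'>k. P k') \<longleftrightarrow> P (Suc k) \<or> (\<exists>k'>Suc k. P k')" for P :: "nat \<Rightarrow> bool"
    by (metis Suc_lessD Suc_lessI lessI)
  show ?thesis
    unfolding unvisited_def descendants_children_Root using later_trees[of "in_tree par _"]
    by (auto simp: descendants_def)
qed

lemma unvisited_last_tree:
  assumes "n - m \<le> k"
  shows "unvisited par m k {} = {}"
proof -
  have "\<not> in_tree par x k'" if x: "x \<in> {1..m}" and k': "k < k'" for x k'
  proof
    assume "in_tree par x k'"
    moreover obtain k0 where "k0 \<le> n - m" "in_tree par x k0"
      using in_tree_exists[OF x] by blast
    ultimately show False using in_tree_unique assms k' by fastforce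
  qed
  then show ?thesis unfolding unvisited_def descendants_def by blast
qed

lemma unvisited_initial: "unvisited par m 0 (children par m (Root 0)) = {1..m}"
proof -
  have "in_tree par x 0 \<or> (\<exists>k'>0. in_tree par x k')" if "x \<in> {1..m}" for x
    using in_tree_exists[OF that] by (metis gr0I)
  then show ?thesis
    unfolding unvisited_def descendants_children_Root by blast
qed

lemma unvisited_in_current_tree:
  "x \<in> unvisited par m k U \<Longrightarrow> in_tree par x k \<Longrightarrow> x \<in> descendants par m U"
  unfolding unvisited_def using in_tree_unique by blast

lemma frontier_pending_record:
  assumes U: "frontier par m k U" "u \<in> U"
  shows "u \<in> pending_records par m k U"
proof -
  have u: "u \<in> descendants par m U" "in_tree par u k"
    using U frontier_subset_descendants unfolding frontier_def by blast+
  have "j = u" if "j \<in> unvisited par m k U" "anc par u j" for j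
    using U u that in_tree_anc_iff unvisited_in_current_tree unfolding frontier_def by blast
  then show ?thesis
    using u unfolding pending_records_def unvisited_def by blast
qed

lemma pending_records_step:
  assumes U: "frontier par m k U" "U \<noteq> {}"
  defines "u \<equiv> Min U"
  defines "U' \<equiv> U - {u} \<union> children par m (Lab u)"
  shows "{x \<in> pending_records par m k U'. x \<in> descendants par m U' \<longrightarrow> u < x}
           = pending_records par m k U - {u}"
proof -
  have u: "u \<in> U" "\<And>c. c \<in> U \<Longrightarrow> u \<le> c"
    using frontier_finite[OF U(1)] U(2) unfolding u_def by auto
  note D = descendants_step[OF U(1) u(1), folded U'_def]
  note V = unvisited_step[OF U(1) u(1), folded U'_def]
  show ?thesis
  proof (intro equalityI subsetI)
    fix x
    assume x: "x \<in> {x \<in> pending_records par m k U'. x \<in> descendants par m U' \<longrightarrow> u < x}"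
    then have xV: "x \<in> unvisited par m k U" "x \<noteq> u"
      unfolding pending_records_def V by auto
    have "j \<le> x" if j: "j \<in> unvisited par m k U" "anc par x j" for j
    proof (cases "j = u")
      case True
      then have "x \<in> descendants par m U'"
        using D xV j u(1) unvisited_subset[of par m k U] unfolding descendants_def by blast
      then show ?thesis using x True by simp
    next
      case False
      then show ?thesis using x j unfolding pending_records_def V by blast
    qed
    then show "x \<in> pending_records par m k U - {u}"
      using xV unfolding pending_records_def by blast
  next
    fix x
    assume x: "x \<in> pending_records par m k U - {u}"
    have "u < x" if xD: "x \<in> descendants par m U'"
    proof -
      obtain c where c: "c \<in> U'" "anc par x c"
        using xD unfolding descendants_def by blast
      obtain d where "d \<in> unvisited par m k U" "anc par x d" "u \<le> d"
      proof (cases "c \<in> U - {u}")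
        case True
        then have "c \<in> unvisited par m k U"
          using frontier_subset_descendants[OF U(1)] unfolding unvisited_def by blast
        then show thesis using that c True u(2) by blast
      next
        case False
        then have "anc par x u" using c anc_trans anc_parent unfolding U'_def children_def by blast
        moreover have "u \<in> unvisited par m k U" using frontier_pending_record[OF U(1) u(1)]
          unfolding pending_records_def by blast
        ultimately show thesis using that by blast
      qed
      then show "u < x" using x unfolding pending_records_def by fastforce
    qed
    then show "x \<in> {x \<in> pending_records par m k U'. x \<in> descendants par m U' \<longrightarrow> u < x}"
      using x unfolding pending_records_def V by auto
  qed
qed

lemma segment_records_psearch:
  assumes "frontier par m k U" and "card (unvisited par m k U) + (n - m - k) \<le> f"
  shows "segment_records S (psearch par m (n - m) f k U)
           = {x \<in> pending_records par m k U. x \<in> descendants par m U \<longrightarrow> (\<forall>y\<in>S. y < x)}"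
  using assms
proof (induction f arbitrary: k U S)
  case 0
  then show ?case using finite_unvisited by (simp add: pending_records_def)
next
  case (Suc f)
  show ?case
  proof (cases "U = {}")
    case False
    define u where "u = Min U"
    define U' where "U' = U - {u} \<union> children par m (Lab u)"
    have u: "u \<in> U"
      using frontier_finite[OF Suc.prems(1)] False unfolding u_def by simp
    have uV: "u \<in> unvisited par m k U"
      using frontier_pending_record[OF Suc.prems(1) u] by (simp add: pending_records_def)
    have "Suc (card (unvisited par m k U')) = card (unvisited par m k U)"
      using card_Suc_Diff1[OF finite_unvisited uV] unvisited_step[OF Suc.prems(1) u]
      unfolding U'_def by simp
    then have fuel: "card (unvisited par m k U') + (n - m - k) \<le> f"
      using Suc.prems(2) by simp
    have IH: "segment_records (insert u S) (psearch par m (n - m) f k U')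
      = {x \<in> pending_records par m k U'. x \<in> descendants par m U' \<longrightarrow> (\<forall>y\<in>insert u S. y < x)}"
      by (rule Suc.IH[OF frontier_step[OF Suc.prems(1) u, folded U'_def] fuel])
    have "psearch par m (n - m) (Suc f) k U = Some u # psearch par m (n - m) f k U'"
      using False unfolding u_def U'_def by simp
    moreover have "x \<in> pending_records par m k U' \<and> (x \<in> descendants par m U' \<longrightarrow> u < x)
        \<longleftrightarrow> x \<in> pending_records par m k U \<and> x \<noteq> u" for x
      using pending_records_step[OF Suc.prems(1) False] unfolding u_def[symmetric] U'_def[symmetric]
      by blast
    moreover have "u \<in> pending_records par m k U" "u \<in> descendants par m U"
      using frontier_pending_record[OF Suc.prems(1) u] frontier_subset_descendants[OF Suc.prems(1)] u
      by blast+
    ultimately show ?thesis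
      using IH descendants_step[OF Suc.prems(1) u, folded U'_def] by auto
  next
    case True
    show ?thesis
    proof (cases "k < n - m")
      case next_tree: True
      have "segment_records S (psearch par m (n - m) (Suc f) k U)
          = segment_records {} (psearch par m (n - m) f (Suc k) (children par m (Root (Suc k))))"
        using True next_tree by simp
      also have "\<dots> = pending_records par m (Suc k) (children par m (Root (Suc k)))"
      proof -
        have "card (unvisited par m (Suc k) (children par m (Root (Suc k)))) + (n - m - Suc k) \<le> f"
          using Suc.prems(2) True next_tree unvisited_next_tree by simp
        from Suc.IH[OF frontier_children_Root this] show ?thesis by simp
      qed
      finally show ?thesis
        using True unvisited_next_tree by (simp add: pending_records_def descendants_def)
    next
      case False
      then show ?thesis using True unvisited_last_tree by (simp add: pending_records_def)
    qed
  qed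
qed

lemma pending_records_initial: "pending_records par m 0 (children par m (Root 0)) = forest_rec m par"
proof -
  have "(\<forall>j\<in>{1..m}. anc par x j \<longrightarrow> j \<le> x) \<longleftrightarrow> (\<forall>j. anc par x j \<longrightarrow> j \<le> x)"
    if "x \<in> {1..m}" for x
    using anc_closed[OF _ that] by blast
  then show ?thesis
    unfolding pending_records_def unvisited_initial forest_rec_def by blast
qed

end

theorem lemma4p5:
  assumes "ordered_forest m n par"
  shows "forest_rec m par = word_rec (priority_traversal m n par)"
proof -
  let ?U\<^sub>0 = "children par m (Root 0)"
  have "m \<le> n"
    using assms unfolding ordered_forest_def by simp
  then have "card (unvisited par m 0 ?U\<^sub>0) + (n - m - 0) \<le> n"
    using unvisited_initial[OF assms] by simp
  then have "segment_records {} (priority_traversal m n par) = pending_records par m 0 ?U\<^sub>0"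
    unfolding priority_traversal_def
    using segment_records_psearch[OF assms frontier_children_Root] by simp
  then show ?thesis
    using pending_records_initial[OF assms] word_rec_eq_segment_records by simp
qed

end
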